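(* In a combinatorial auction as described in the context, a Walrasian equilibrium $(x^*,p)$ is a price-match equilibrium if and only if $$p\bm Ax^*=w(\mathcal I\setminus i,c,\mathcal K(p))\qquad\text{for all } i\in\mathcal I.$$
   Context: Combinatorial auction: item types $j\in\mathcal J$ with supply $c_j\in\mathbb Z_{\ge1}$ (vector $c$); bidders $\mathcal I$; finite set of bids $\mathcal K$, bid $k$ made by bidder $i(k)$ with bundle $a^k\in\mathbb Z^J_{\ge0}$, $a^k\le c$, amount $b_k\ge0$; $\mathcal K_i$ = bids of bidder $i$; bids taken truthful. $\bm A$ = matrix with columns $a^k$, $\bm B$ with $\bm B_{i,k}=1$ iff $k\in\mathcal K_i$. Feasible allocation: $x\in\{0,1\}^K$, $\bm Ax\le c$, $\bm Bx\le\bm 1$. For a set of bidders $\mathcal C$, supply $c'$ and a bid collection with given amounts, $w(\mathcal C,c',\cdot)$ = maximum total bid amount over feasible allocations with supply $c'$ using only bids of bidders in $\mathcal C$. $x^*$ efficient allocation; $a^{i*},b_{i*}$ bundle and amount of $i$'s accepted bid ($\bm 0,0$ if none). $\mathcal K(p)$ denotes the same bids with amounts replaced by $b^p_k=p\,a^k$ if $p\,a^k\le b_k$ and $b^p_k=0$ otherwise. A Walrasian equilibrium (WE) is $(x^*,p)$, $p\ge0$, with $s_i=b_{i*}-p\,a^{i*}\ge0$, $p\,a^k+s_{i(k)}\ge b_k$ for all bids $k$, and $p_j=0$ for items in excess supply under $x^*$. A WE is a price-match equilibrium (PME) if for every bidder $i$ there is a feasible allocation $x^{-i}$ with $x^{-i}_k=0$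 for $k\in\mathcal K_i$, $p\,a^k\le b_k$ whenever $x^{-i}_k=1$, and $p\bm Ax^{-i}=p\bm Ax^*$. (Items may include artificial items, i.e. valid cuts added as rows of $\bm A$.) *)

theory Defs
  imports Complex_Main
begin

text \<open>Combinatorial auction data: item set J, bidder set I, bid set K,
  bundle a k j (quantity of item j in bid k), amount bb k, bidder owner k.
  An allocation x in {0,1}^K is represented by the set S of accepted bids.\<close>

definition price_of :: "'j set \<Rightarrow> ('j \<Rightarrow> real) \<Rightarrow> ('j \<Rightarrow> nat) \<Rightarrow> real" where
  "price_of J p v = (\<Sum>j\<in>J. p j * real (v j))"

definition feasible ::
  "'j set \<Rightarrow> 'i set \<Rightarrow> 'k set \<Rightarrow> ('k \<Rightarrow> 'j \<Rightarrow> nat) \<Rightarrow> ('k \<Rightarrow> 'i)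
   \<Rightarrow> ('j \<Rightarrow> nat) \<Rightarrow> 'k set \<Rightarrow> bool" where
  "feasible J I K a owner c' S \<longleftrightarrow>
     S \<subseteq> K \<and> (\<forall>j\<in>J. (\<Sum>k\<in>S. a k j) \<le> c' j)
     \<and> (\<forall>i\<in>I. card {k\<in>S. owner k = i} \<le> 1)"

definition w ::
  "'j set \<Rightarrow> 'i set \<Rightarrow> 'k set \<Rightarrow> ('k \<Rightarrow> 'j \<Rightarrow> nat) \<Rightarrow> ('k \<Rightarrow> 'i)
   \<Rightarrow> 'i set \<Rightarrow> ('j \<Rightarrow> nat) \<Rightarrow> ('k \<Rightarrow> real) \<Rightarrow> real" where
  "w J I K a owner C c' bb =
     Max ((\<lambda>S. \<Sum>k\<in>S. bb k) ` {S. feasible J I K a owner c' S \<and> (\<forall>k\<in>S. owner k \<in> C)})"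

text \<open>Amounts of the bid collection K(p).\<close>
definition bids_at_prices ::
  "'j set \<Rightarrow> ('k \<Rightarrow> 'j \<Rightarrow> nat) \<Rightarrow> ('k \<Rightarrow> real) \<Rightarrow> ('j \<Rightarrow> real) \<Rightarrow> 'k \<Rightarrow> real" where
  "bids_at_prices J a bb p k = (if price_of J p (a k) \<le> bb k then price_of J p (a k) else 0)"

definition efficient ::
  "'j set \<Rightarrow> 'i set \<Rightarrow> 'k set \<Rightarrow> ('k \<Rightarrow> 'j \<Rightarrow> nat) \<Rightarrow> ('k \<Rightarrow> real) \<Rightarrow> ('k \<Rightarrow> 'i)
   \<Rightarrow> ('j \<Rightarrow> nat) \<Rightarrow> 'k set \<Rightarrow> bool" where
  "efficient J I K a bb owner c S \<longleftrightarrow> feasible J I K a owner c S \<and>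
     (\<forall>T. feasible J I K a owner c T \<longrightarrow> (\<Sum>k\<in>T. bb k) \<le> (\<Sum>k\<in>S. bb k))"

text \<open>Bundle a^{i*} and amount b_{i*} of bidder i's accepted bid under S
  (sums over the at most one accepted bid of i; zero if none).\<close>
definition acc_bundle :: "('k \<Rightarrow> 'j \<Rightarrow> nat) \<Rightarrow> ('k \<Rightarrow> 'i) \<Rightarrow> 'k set \<Rightarrow> 'i \<Rightarrow> 'j \<Rightarrow> nat" where
  "acc_bundle a owner S i j = (\<Sum>k\<in>{k\<in>S. owner k = i}. a k j)"

definition acc_amount :: "('k \<Rightarrow> real) \<Rightarrow> ('k \<Rightarrow> 'i) \<Rightarrow> 'k set \<Rightarrow> 'i \<Rightarrow> real" where
  "acc_amount bb owner S i = (\<Sum>k\<in>{k\<in>S. owner k = i}. bb k)"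

definition alloc_value :: "'j set \<Rightarrow> ('k \<Rightarrow> 'j \<Rightarrow> nat) \<Rightarrow> ('j \<Rightarrow> real) \<Rightarrow> 'k set \<Rightarrow> real" where
  "alloc_value J a p S = (\<Sum>j\<in>J. p j * real (\<Sum>k\<in>S. a k j))"

definition walrasian ::
  "'j set \<Rightarrow> 'i set \<Rightarrow> 'k set \<Rightarrow> ('k \<Rightarrow> 'j \<Rightarrow> nat) \<Rightarrow> ('k \<Rightarrow> real) \<Rightarrow> ('k \<Rightarrow> 'i)
   \<Rightarrow> ('j \<Rightarrow> nat) \<Rightarrow> 'k set \<Rightarrow> ('j \<Rightarrow> real) \<Rightarrow> bool" where
  "walrasian J I K a bb owner c S p \<longleftrightarrow>
     (\<forall>j\<in>J. p j \<ge> 0)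
     \<and> (\<forall>i\<in>I. acc_amount bb owner S i - price_of J p (acc_bundle a owner S i) \<ge> 0)
     \<and> (\<forall>k\<in>K. price_of J p (a k)
              + (acc_amount bb owner S (owner k) - price_of J p (acc_bundle a owner S (owner k)))
              \<ge> bb k)
     \<and> (\<forall>j\<in>J. (\<Sum>k\<in>S. a k j) < c j \<longrightarrow> p j = 0)"

definition price_match ::
  "'j set \<Rightarrow> 'i set \<Rightarrow> 'k set \<Rightarrow> ('k \<Rightarrow> 'j \<Rightarrow> nat) \<Rightarrow> ('k \<Rightarrow> real) \<Rightarrow> ('k \<Rightarrow> 'i)
   \<Rightarrow> ('j \<Rightarrow> nat) \<Rightarrow> 'k set \<Rightarrow> ('j \<Rightarrow> real) \<Rightarrow> bool" where
  "price_match J I K a bb owner c S p \<longleftrightarrow>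
     walrasian J I K a bb owner c S p \<and>
     (\<forall>i\<in>I. \<exists>T. feasible J I K a owner c T \<and> (\<forall>k\<in>T. owner k \<noteq> i)
        \<and> (\<forall>k\<in>T. price_of J p (a k) \<le> bb k)
        \<and> alloc_value J a p T = alloc_value J a p S)"

end

theory Submission
  imports Defs
begin

text \<open>Under Walrasian prices every item with a positive price is sold out, so
  \<open>p A x\<^sup>* = p c\<close>, the largest price value of any feasible allocation. In \<open>\<K>(p)\<close> an
  allocation is worth exactly the price value of those of its bids whose amount covers their
  price, and these bids again form a feasible allocation. Hence \<open>w(\<I> \ i, c, \<K>(p)) \<le> p A x\<^sup>*\<close>,
  with equality iff some feasible allocation avoiding bidder \<open>i\<close> and using only bids that
  cover their price has price value \<open>p A x\<^sup>*\<close>, which is the price-match condition for \<open>i\<close>.\<close>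

lemma alloc_value_eq_sum_price_of:
  assumes "finite J" "finite T"
  shows "alloc_value J a p T = (\<Sum>k\<in>T. price_of J p (a k))"
proof -
  have "alloc_value J a p T = (\<Sum>j\<in>J. \<Sum>k\<in>T. p j * real (a k j))"
    unfolding alloc_value_def by (simp add: of_nat_sum sum_distrib_left)
  also have "\<dots> = (\<Sum>k\<in>T. \<Sum>j\<in>J. p j * real (a k j))"
    by (rule sum.swap)
  finally show ?thesis unfolding price_of_def .
qed

lemma sum_bids_at_prices_eq_alloc_value:
  assumes "finite J" "finite T"
  shows "(\<Sum>k\<in>T. bids_at_prices J a bb p k)
    = alloc_value J a p {k\<in>T. price_of J p (a k) \<le> bb k}"
proof -
  have "(\<Sum>k\<in>T. bids_at_prices J a bb p k)
      = (\<Sum>k\<in>{k\<in>T. price_of J p (a k) \<le> bb k}. price_of J p (a k))"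
    unfolding bids_at_prices_def using assms(2) by (simp add: sum.inter_filter)
  then show ?thesis using assms by (simp add: alloc_value_eq_sum_price_of)
qed

lemma feasible_finite:
  assumes "feasible J I K a owner c T" "finite K"
  shows "finite T"
  using assms unfolding feasible_def by (blast intro: finite_subset)

lemma feasible_subset:
  assumes "feasible J I K a owner c T" "T' \<subseteq> T" "finite K"
  shows "feasible J I K a owner c T'"
proof -
  have "finite T" using assms(1,3) by (rule feasible_finite)
  then have "(\<Sum>k\<in>T'. a k j) \<le> (\<Sum>k\<in>T. a k j)"
    and "card {k\<in>T'. owner k = i} \<le> card {k\<in>T. owner k = i}" for j i using assms(2) by (auto intro: sum_mono2 card_mono)
  with assms(1,2) show ?thesis unfolding feasible_def by (meson order_trans subset_trans)
qed

lemma alloc_value_le_supply_value: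
  assumes "feasible J I K a owner c T" "\<forall>j\<in>J. p j \<ge> 0"
  shows "alloc_value J a p T \<le> (\<Sum>j\<in>J. p j * real (c j))"
  unfolding alloc_value_def
proof (rule sum_mono)
  fix j assume "j \<in> J"
  then have "(\<Sum>k\<in>T. a k j) \<le> c j" "p j \<ge> 0" using assms unfolding feasible_def by auto
  then show "p j * real (\<Sum>k\<in>T. a k j) \<le> p j * real (c j)"
    by (intro mult_left_mono of_nat_mono)
qed

lemma walrasian_alloc_value_eq_supply_value:
  assumes "feasible J I K a owner c S" "walrasian J I K a bb owner c S p"
  shows "alloc_value J a p S = (\<Sum>j\<in>J. p j * real (c j))"
  unfolding alloc_value_def
proof (rule sum.cong)
  fix j assume "j \<in> J"
  then have "(\<Sum>k\<in>S. a k j) \<le> c j" "(\<Sum>k\<in>S. a k j) < c j \<longrightarrow> p j = 0"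
    using assms unfolding feasible_def walrasian_def by auto
  then show "p j * real (\<Sum>k\<in>S. a k j) = p j * real (c j)"
    by (cases "(\<Sum>k\<in>S. a k j) < c j") auto
qed simp

lemma finite_coalition_values:
  assumes "finite K"
  shows "finite ((\<lambda>T. \<Sum>k\<in>T. v k) ` {T. feasible J I K a owner c' T \<and> (\<forall>k\<in>T. owner k \<in> C)})"
proof -
  have "{T. feasible J I K a owner c' T \<and> (\<forall>k\<in>T. owner k \<in> C)} \<subseteq> Pow K"
    unfolding feasible_def by auto
  then show ?thesis using assms by (meson finite_Pow_iff finite_imageI finite_subset)
qed

lemma w_ge:
  assumes "finite K" "feasible J I K a owner c' T" "\<forall>k\<in>T. owner k \<in> C"
  shows "(\<Sum>k\<in>T. v k) \<le> w J I K a owner C c' v"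
  unfolding w_def using assms finite_coalition_values[OF assms(1)] by (intro Max_ge) auto

lemma w_attained:
  assumes "finite K"
  obtains T where "feasible J I K a owner c' T" "\<forall>k\<in>T. owner k \<in> C"
    "(\<Sum>k\<in>T. v k) = w J I K a owner C c' v"
proof -
  have "feasible J I K a owner c' {}" unfolding feasible_def by simp
  then have "w J I K a owner C c' v
      \<in> (\<lambda>T. \<Sum>k\<in>T. v k) ` {T. feasible J I K a owner c' T \<and> (\<forall>k\<in>T. owner k \<in> C)}"
    unfolding w_def using finite_coalition_values[OF assms] by (intro Max_in) auto
  then show ?thesis using that by (auto simp: image_iff)
qed

lemma w_bids_at_prices_attained:
  assumes "finite J" "finite K"
  obtains T where "feasible J I K a owner c' T" "\<forall>k\<in>T. owner k \<in> C"
    "\<forall>k\<in>T. price_of J p (a k) \<le> bb k"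
    "alloc_value J a p T = w J I K a owner C c' (bids_at_prices J a bb p)"
proof -
  obtain U where U: "feasible J I K a owner c' U" "\<forall>k\<in>U. owner k \<in> C"
    "(\<Sum>k\<in>U. bids_at_prices J a bb p k) = w J I K a owner C c' (bids_at_prices J a bb p)"
    by (rule w_attained[OF assms(2)])
  define T where "T = {k\<in>U. price_of J p (a k) \<le> bb k}"
  have "feasible J I K a owner c' T"
    by (rule feasible_subset[OF U(1) _ assms(2)]) (simp add: T_def)
  moreover have "alloc_value J a p T = (\<Sum>k\<in>U. bids_at_prices J a bb p k)"
    unfolding T_def using assms(1) feasible_finite[OF U(1) assms(2)]
    by (rule sum_bids_at_prices_eq_alloc_value[symmetric])
  ultimately show ?thesis using that U(2,3) unfolding T_def by auto
qed

lemma alloc_value_le_w_bids_at_prices: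
  assumes "finite J" "finite K" "feasible J I K a owner c' T" "\<forall>k\<in>T. owner k \<in> C"
    and "\<forall>k\<in>T. price_of J p (a k) \<le> bb k"
  shows "alloc_value J a p T \<le> w J I K a owner C c' (bids_at_prices J a bb p)"
proof -
  have "{k\<in>T. price_of J p (a k) \<le> bb k} = T" using assms(5) by auto
  then have "alloc_value J a p T = (\<Sum>k\<in>T. bids_at_prices J a bb p k)"
    using sum_bids_at_prices_eq_alloc_value[OF assms(1) feasible_finite[OF assms(3,2)]] by simp
  also have "\<dots> \<le> w J I K a owner C c' (bids_at_prices J a bb p)"
    using assms(2-4) by (rule w_ge)
  finally show ?thesis .
qed

lemma price_matching_allocation_iff:
  assumes "finite J" "finite K" "\<forall>k\<in>K. owner k \<in> I"
    and "feasible J I K a owner c S" "walrasian J I K a bb owner c S p"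
  shows "(\<exists>T. feasible J I K a owner c T \<and> (\<forall>k\<in>T. owner k \<noteq> i)
        \<and> (\<forall>k\<in>T. price_of J p (a k) \<le> bb k) \<and> alloc_value J a p T = alloc_value J a p S)
    \<longleftrightarrow> alloc_value J a p S = w J I K a owner (I - {i}) c (bids_at_prices J a bb p)"
    (is "?match \<longleftrightarrow> ?V = ?W")
proof -
  obtain T where T: "feasible J I K a owner c T" "\<forall>k\<in>T. owner k \<in> I - {i}"
    "\<forall>k\<in>T. price_of J p (a k) \<le> bb k" "alloc_value J a p T = ?W"
    using w_bids_at_prices_attained[OF assms(1,2)] by metis
  have p_nonneg: "\<forall>j\<in>J. p j \<ge> 0" using assms(5) unfolding walrasian_def by blast
  have "?W \<le> ?V"
    using alloc_value_le_supply_value[OF T(1) p_nonneg] T(4)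
      walrasian_alloc_value_eq_supply_value[OF assms(4,5)] by simp
  show ?thesis
  proof
    assume ?match
    then obtain U where U: "feasible J I K a owner c U" "\<forall>k\<in>U. owner k \<noteq> i"
      "\<forall>k\<in>U. price_of J p (a k) \<le> bb k" "alloc_value J a p U = ?V"
      by blast
    have "\<forall>k\<in>U. owner k \<in> I - {i}" using U(1,2) assms(3) unfolding feasible_def by auto
    then have "?V \<le> ?W"
      using alloc_value_le_w_bids_at_prices[OF assms(1,2) U(1) _ U(3)] U(4) by simp
    with \<open>?W \<le> ?V\<close> show "?V = ?W" by simp
  next
    assume "?V = ?W"
    then show ?match using T by auto
  qed
qed

theorem proposition4:
  fixes J :: "'j set" and I :: "'i set" and K :: "'k set"
    and a :: "'k \<Rightarrow> 'j \<Rightarrow> nat" and bb :: "'k \<Rightarrow> real" and owner :: "'k \<Rightarrow> 'i"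
    and c :: "'j \<Rightarrow> nat" and S :: "'k set" and p :: "'j \<Rightarrow> real"
  assumes "finite J" and "finite I" and "finite K"
    and "\<forall>j\<in>J. c j \<ge> 1"
    and "\<forall>k\<in>K. owner k \<in> I"
    and "\<forall>k\<in>K. \<forall>j\<in>J. a k j \<le> c j"
    and "\<forall>k\<in>K. bb k \<ge> 0"
    and "efficient J I K a bb owner c S"
    and "walrasian J I K a bb owner c S p"
  shows "price_match J I K a bb owner c S p \<longleftrightarrow>
    (\<forall>i\<in>I. alloc_value J a p S = w J I K a owner (I - {i}) c (bids_at_prices J a bb p))"
proof -
  have "feasible J I K a owner c S" using assms(8) unfolding efficient_def by blast
  from price_matching_allocation_iff[OF assms(1,3,5) this assms(9)] show ?thesis
    unfolding price_match_def using assms(9) by blast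
qed

end
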